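(* For every integer $m\ge1$, $$\sum_{i=0}^{\lfloor (m-1)/2\rfloor}(-1)^i\binom{2m}{m-1-2i}=\sum_{k=0}^{m-1}2^{m-1-k}\binom{2k}{k}.$$ *)

theory Defs
  imports Main
begin

end

theory Submission
  imports Defs
begin

text \<open>Both sides satisfy \<open>s (m + 1) = 2 s m + (2m choose m)\<close> with \<open>s 0 = 0\<close>. For the
  alternating sum, expand \<open>(2m+2 choose m - 2i)\<close> by Pascal's rule twice into
  \<open>(2m choose m - 2i) + 2 (2m choose m - 1 - 2i) + (2m choose m - 2 - 2i)\<close>: the outer terms
  telescope to \<open>2m choose m\<close>, the middle ones give twice the previous alternating sum.
  Letting the lower index range over the integers (with value 0 below zero) makes the
  summation range irrelevant once it is long enough.\<close>

definition choose_int :: "nat \<Rightarrow> int \<Rightarrow> int" where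
  "choose_int n k = (if k < 0 then 0 else int (n choose nat k))"

lemma choose_int_Suc: "choose_int (Suc n) k = choose_int n k + choose_int n (k - 1)"
proof (cases "k \<le> 0")
  case True
  then show ?thesis by (auto simp: choose_int_def)
next
  case False
  then have "nat k = Suc (nat (k - 1))" by arith
  with False show ?thesis by (simp add: choose_int_def)
qed

lemma choose_int_Suc_Suc:
  "choose_int (Suc (Suc n)) k = choose_int n k + 2 * choose_int n (k - 1) + choose_int n (k - 2)"
  by (simp add: choose_int_Suc algebra_simps)

lemma sum_alternating_telescope:
  fixes c :: "nat \<Rightarrow> int"
  shows "(\<Sum>i<N. (-1) ^ i * (c i + c (Suc i))) = c 0 - (-1) ^ N * c N"
  by (induction N) (auto simp: algebra_simps)

definition alternating_binomial_sum :: "nat \<Rightarrow> nat \<Rightarrow> int" where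
  "alternating_binomial_sum m N = (\<Sum>i<N. (-1) ^ i * choose_int (2 * m) (int m - 1 - 2 * int i))"

lemma alternating_binomial_sum_stable:
  assumes "m \<le> N"
  shows "alternating_binomial_sum m N = alternating_binomial_sum m m"
  unfolding alternating_binomial_sum_def
  by (rule sum.mono_neutral_right) (use assms in \<open>auto simp: choose_int_def\<close>)

lemma alternating_binomial_sum_Suc:
  assumes "Suc m \<le> N"
  shows "alternating_binomial_sum (Suc m) N = 2 * alternating_binomial_sum m N + int ((2 * m) choose m)"
proof -
  define c where "c i = choose_int (2 * m) (int m - 2 * int i)" for i
  have pascal: "(-1) ^ i * choose_int (2 * Suc m) (int (Suc m) - 1 - 2 * int i)
      = (-1) ^ i * (c i + c (Suc i)) + 2 * ((-1) ^ i * choose_int (2 * m) (int m - 1 - 2 * int i))"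
    for i
    using choose_int_Suc_Suc[of "2 * m" "int m - 2 * int i"]
    by (simp add: c_def algebra_simps)
  have "alternating_binomial_sum (Suc m) N
      = (\<Sum>i<N. (-1) ^ i * (c i + c (Suc i))) + 2 * alternating_binomial_sum m N"
    unfolding alternating_binomial_sum_def pascal by (simp add: sum.distrib sum_distrib_left)
  also have "(\<Sum>i<N. (-1) ^ i * (c i + c (Suc i))) = c 0 - (-1) ^ N * c N"
    by (rule sum_alternating_telescope)
  also have "c N = 0"
    using assms by (simp add: c_def choose_int_def)
  also have "c 0 = int ((2 * m) choose m)"
    by (simp add: c_def choose_int_def)
  finally show ?thesis by simp
qed

definition weighted_central_binomial_sum :: "nat \<Rightarrow> int" where
  "weighted_central_binomial_sum m = (\<Sum>k<m. 2 ^ (m - 1 - k) * int ((2 * k) choose k))"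

lemma weighted_central_binomial_sum_Suc:
  "weighted_central_binomial_sum (Suc m) = 2 * weighted_central_binomial_sum m + int ((2 * m) choose m)"
proof -
  have "2 ^ (m - k) = 2 * (2::int) ^ (m - 1 - k)" if "k < m" for k
    using that by (simp flip: power_Suc add: Suc_diff_Suc)
  then have "(\<Sum>k<m. 2 ^ (m - k) * int ((2 * k) choose k)) = 2 * weighted_central_binomial_sum m"
    unfolding weighted_central_binomial_sum_def sum_distrib_left by (intro sum.cong) auto
  then show ?thesis by (simp add: weighted_central_binomial_sum_def)
qed

lemma alternating_binomial_sum_eq_weighted_central:
  "alternating_binomial_sum m m = weighted_central_binomial_sum m"
proof (induction m)
  case 0
  then show ?case by (simp add: alternating_binomial_sum_def weighted_central_binomial_sum_def)
next
  case (Suc m)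
  have "alternating_binomial_sum (Suc m) (Suc m) = 2 * alternating_binomial_sum m (Suc m) + int ((2 * m) choose m)"
    by (rule alternating_binomial_sum_Suc) simp
  also have "alternating_binomial_sum m (Suc m) = alternating_binomial_sum m m"
    by (rule alternating_binomial_sum_stable) simp
  finally show ?case by (simp add: Suc.IH weighted_central_binomial_sum_Suc)
qed

theorem mainTheorem8:
  fixes m :: nat
  assumes "m \<ge> 1"
  shows "(\<Sum>i=0..(m - 1) div 2. (-1::int) ^ i * int ((2*m) choose (m - 1 - 2*i)))
       = (\<Sum>k=0..m - 1. (2::int) ^ (m - 1 - k) * int ((2*k) choose k))"
proof -
  have "(\<Sum>i=0..(m - 1) div 2. (-1::int) ^ i * int ((2*m) choose (m - 1 - 2*i)))
      = (\<Sum>i=0..(m - 1) div 2. (-1) ^ i * choose_int (2 * m) (int m - 1 - 2 * int i))"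
    using assms by (intro sum.cong) (auto simp: choose_int_def nat_diff_distrib' nat_mult_distrib)
  also have "\<dots> = alternating_binomial_sum m m"
    unfolding alternating_binomial_sum_def
    using assms by (intro sum.mono_neutral_left) (auto simp: choose_int_def)
  also have "\<dots> = weighted_central_binomial_sum m"
    by (rule alternating_binomial_sum_eq_weighted_central)
  also have "\<dots> = (\<Sum>k=0..m - 1. (2::int) ^ (m - 1 - k) * int ((2*k) choose k))"
    unfolding weighted_central_binomial_sum_def using assms by (intro sum.cong) auto
  finally show ?thesis .
qed

end
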